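(* Let $p\ge 2$ and $q\in\{0,1,\dots,p-2\}$ be integers, let $x$ be a right vertex of $T_H$, let $f$ be any $2p$ distance coloring of $T_H$, and let $v\in\mathcal{F}^{c}_{x,p-q}$ be a corner vertex. Then $$\big|\{u\in\mathcal{F}_{x,p+q+1} : f(u)=f(v)\}\big|\le 2.$$
   Context: $T_H$ is the infinite hexagonal grid with vertex set $\mathbb{Z}^2$: $(i,j)$ is adjacent to $(i,j\pm1)$, and $(i,j)$ is adjacent to $(i+1,j)$ iff $i+j$ is even; no other edges. A vertex $(i,j)$ with $i+j$ even is called a right vertex. $d(u,v)$ is graph distance. A $2p$ distance coloring is a map $f:V(T_H)\to\{1,\dots,n\}$ with $f(u)\ne f(v)$ for all distinct $u,v$ with $d(u,v)\le 2p$. For a vertex $x$ and integer $k\ge0$, $\mathcal{F}_{x,k}=\{u: d(x,u)=k\}$. For a right vertex $x=(i,j)$ and $k\ge2$, the six corner vertices of $\mathcal{F}_{x,k}$ are $(i,j+k)$, $(i+\lceil k/2\rceil, j+\lfloor k/2\rfloor)$, $(i+\lceil k/2\rceil, j-\lfloor k/2\rfloor)$, $(i,j-k)$, $(i-\lfloor k/2\rfloor, j-\lceil k/2\rceil)$, $(i-\lfloor k/2\rfloor, j+\lceil k/2\rceil)$ (all lie in $\mathcal{F}_{x,k}$); their set is denoted $\mathcal{F}^c_{x,k}$, and $\mathcal{F}^{nc}_{x,k}=\mathcal{F}_{x,k}\setminus\mathcal{F}^c_{x,k}$ is the set of non corner vertices. *)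

theory Defs
  imports Main
begin

type_synonym vtx = "int \<times> int"

text \<open>Edges of the hexagonal grid T_H on Z^2.\<close>
definition hex_adj :: "vtx \<Rightarrow> vtx \<Rightarrow> bool" where
  "hex_adj u v \<longleftrightarrow>
     (fst v = fst u \<and> (snd v = snd u + 1 \<or> snd v = snd u - 1)) \<or>
     (snd v = snd u \<and> fst v = fst u + 1 \<and> even (fst u + snd u)) \<or>
     (snd v = snd u \<and> fst u = fst v + 1 \<and> even (fst v + snd v))"

definition right_vertex :: "vtx \<Rightarrow> bool" where
  "right_vertex u \<longleftrightarrow> even (fst u + snd u)"

fun walk :: "nat \<Rightarrow> vtx \<Rightarrow> vtx \<Rightarrow> bool" where
  "walk 0 u v \<longleftrightarrow> u = v"
| "walk (Suc n) u v \<longleftrightarrow> (\<exists>w. hex_adj u w \<and> walk n w v)"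

text \<open>graph distance (T_H is connected, so the LEAST is attained)\<close>
definition hdist :: "vtx \<Rightarrow> vtx \<Rightarrow> nat" where
  "hdist u v = (LEAST n. walk n u v)"

definition dist_coloring :: "nat \<Rightarrow> nat \<Rightarrow> (vtx \<Rightarrow> nat) \<Rightarrow> bool" where
  "dist_coloring p n f \<longleftrightarrow> (\<forall>u. f u \<in> {1..n}) \<and>
     (\<forall>u v. u \<noteq> v \<and> hdist u v \<le> 2 * p \<longrightarrow> f u \<noteq> f v)"

definition sphere :: "vtx \<Rightarrow> nat \<Rightarrow> vtx set" where
  "sphere x k = {u. hdist x u = k}"

text \<open>corner vertices of F_{x,k} (x a right vertex, k \<ge> 2);
  ceil(k/2) = (k+1) div 2, floor(k/2) = k div 2\<close>
definition corners :: "vtx \<Rightarrow> nat \<Rightarrow> vtx set" where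
  "corners x k = (let i = fst x; j = snd x; c = int ((k + 1) div 2); d = int (k div 2) in
     {(i, j + int k), (i + c, j + d), (i + c, j - d), (i, j - int k),
      (i - d, j - c), (i - d, j + c)})"

end

theory Submission
  imports Defs
begin

text \<open>Distances in \<open>T_H\<close> have a closed form: from a vertex to its translate by \<open>(dx, dy)\<close> one needs
  at least \<open>|dx| + |dy|\<close> steps, and, since horizontal edges alternate with vertical ones, at least
  \<open>2|dx| - 1\<close> steps, one more when \<open>dx\<close> points away from the vertex's own horizontal edge.
  Hence the sphere \<open>F_{x,R}\<close>, \<open>R = p + q + 1\<close>, around a right vertex \<open>x\<close> is a hexagon, and any
  two of its vertices on a common side are at distance at most \<open>R + 1 \<le> 2p\<close>.
  A vertex \<open>u \<in> F_{x,R}\<close> coloured like the corner \<open>v\<close> of \<open>F_{x,K}\<close>, \<open>K = p - q\<close>, satisfies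
  \<open>d(v, u) \<ge> 2p + 1 = R + K\<close>, which forces \<open>u\<close> onto one of the two sides of the hexagon opposite
  to \<open>v\<close>. Each of these two sides contains at most one vertex of that colour.\<close>

text \<open>\<open>offset_dist dx dy r\<close> is the distance from a vertex to its translate by \<open>(dx, dy)\<close>, where \<open>r\<close>
  says whether the vertex is a right vertex. The \<open>mod 2\<close> term adjusts the parity, \<open>T_H\<close> being
  bipartite.\<close>

definition horizontal_cost :: "int \<Rightarrow> bool \<Rightarrow> int" where
  "horizontal_cost dx r = 2 * \<bar>dx\<bar> - 1 + of_bool (dx > 0 \<and> \<not> r \<or> dx < 0 \<and> r)"

definition offset_dist :: "int \<Rightarrow> int \<Rightarrow> bool \<Rightarrow> int" where
  "offset_dist dx dy r = max (\<bar>dx\<bar> + \<bar>dy\<bar>)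
     (horizontal_cost dx r + (horizontal_cost dx r - \<bar>dx\<bar> - \<bar>dy\<bar>) mod 2)"

text \<open>Along an edge the formula drops by at most one (the \<open>_le\<close> lemmas), and away from the target
  some edge makes it drop by exactly one (the \<open>_eq\<close> lemmas); this identifies it with \<open>hdist\<close>.\<close>

lemma offset_dist_up_le: "offset_dist dx dy r \<le> offset_dist dx (dy - 1) (\<not> r) + 1"
  unfolding offset_dist_def horizontal_cost_def
  by (cases "dx > 0"; cases "dx < 0"; cases r; cases "dy > 0"; simp; presburger)

lemma offset_dist_down_le: "offset_dist dx dy r \<le> offset_dist dx (dy + 1) (\<not> r) + 1"
  unfolding offset_dist_def horizontal_cost_def
  by (cases "dx > 0"; cases "dx < 0"; cases r; cases "dy < 0"; simp; presburger)

lemma offset_dist_right_le: "r \<Longrightarrow> offset_dist dx dy r \<le> offset_dist (dx - 1) dy False + 1"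
  unfolding offset_dist_def horizontal_cost_def
  by (cases "dx > 1"; cases "dx < 1"; cases "dy < 0"; simp; presburger)

lemma offset_dist_left_le: "\<not> r \<Longrightarrow> offset_dist dx dy r \<le> offset_dist (dx + 1) dy True + 1"
  unfolding offset_dist_def horizontal_cost_def
  by (cases "dx > -1"; cases "dx < -1"; cases "dy < 0"; simp; presburger)

lemma offset_dist_right_eq: "r \<Longrightarrow> dx > 0 \<Longrightarrow> offset_dist (dx - 1) dy False + 1 = offset_dist dx dy r"
  unfolding offset_dist_def horizontal_cost_def by (cases "dx > 1"; cases "dy < 0"; simp; presburger)

lemma offset_dist_left_eq: "\<not> r \<Longrightarrow> dx < 0 \<Longrightarrow> offset_dist (dx + 1) dy True + 1 = offset_dist dx dy r"
  unfolding offset_dist_def horizontal_cost_def by (cases "dx < -1"; cases "dy < 0"; simp; presburger)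

lemma offset_dist_up_eq:
  "\<not> (dx > 0 \<and> r) \<Longrightarrow> \<not> (dx < 0 \<and> \<not> r) \<Longrightarrow> dy \<ge> 0 \<Longrightarrow> (dx, dy) \<noteq> (0, 0) \<Longrightarrow>
   offset_dist dx (dy - 1) (\<not> r) + 1 = offset_dist dx dy r"
  unfolding offset_dist_def horizontal_cost_def
  by (cases "dx > 0"; cases "dx < 0"; cases r; cases "dy > 0"; simp; presburger)

lemma offset_dist_down_eq:
  "\<not> (dx > 0 \<and> r) \<Longrightarrow> \<not> (dx < 0 \<and> \<not> r) \<Longrightarrow> dy < 0 \<Longrightarrow>
   offset_dist dx (dy + 1) (\<not> r) + 1 = offset_dist dx dy r"
  unfolding offset_dist_def horizontal_cost_def
  by (cases "dx > 0"; cases "dx < 0"; cases r; cases "dy < -1"; simp; presburger)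

lemma offset_dist_nonneg: "offset_dist dx dy r \<ge> 0"
  unfolding offset_dist_def by simp

lemma offset_dist_vertical: "offset_dist 0 dy r = \<bar>dy\<bar>"
  unfolding offset_dist_def horizontal_cost_def by simp

lemma offset_dist_eq_0_iff: "offset_dist dx dy r = 0 \<longleftrightarrow> dx = 0 \<and> dy = 0"
  unfolding offset_dist_def horizontal_cost_def by (cases "dx > 0"; cases "dx < 0"; simp; presburger)

lemma offset_dist_bounds:
  "\<bar>dx\<bar> + \<bar>dy\<bar> \<le> offset_dist dx dy r \<and> horizontal_cost dx r \<le> offset_dist dx dy r \<and>
   (offset_dist dx dy r = \<bar>dx\<bar> + \<bar>dy\<bar> \<or> offset_dist dx dy r \<le> horizontal_cost dx r + 1)"
  unfolding offset_dist_def by (auto simp: max_def)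

lemma offset_dist_diagonal: "offset_dist t t r = 2 * \<bar>t\<bar>" "offset_dist t (- t) r = 2 * \<bar>t\<bar>"
  unfolding offset_dist_def horizontal_cost_def by (cases "t > 0"; cases "t < 0"; cases r; simp)+

definition hex_dist :: "vtx \<Rightarrow> vtx \<Rightarrow> int" where
  "hex_dist a b = offset_dist (fst b - fst a) (snd b - snd a) (right_vertex a)"

lemma hex_dist_adj_le:
  assumes "hex_adj a w" shows "hex_dist a b \<le> hex_dist w b + 1"
proof -
  obtain i j k l where ab: "a = (i, j)" "b = (k, l)" by fastforce
  from assms consider "w = (i, j + 1)" | "w = (i, j - 1)"
    | "w = (i + 1, j)" "right_vertex a" | "w = (i - 1, j)" "\<not> right_vertex a"
    unfolding ab hex_adj_def right_vertex_def by (cases w; auto; presburger)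
  then show ?thesis
  proof cases
    case 1 then show ?thesis using offset_dist_up_le[of "k - i" "l - j" "even (i + j)"]
      unfolding ab hex_dist_def right_vertex_def by (simp add: algebra_simps)
  next
    case 2 then show ?thesis using offset_dist_down_le[of "k - i" "l - j" "even (i + j)"]
      unfolding ab hex_dist_def right_vertex_def by (simp add: algebra_simps)
  next
    case 3 then show ?thesis using offset_dist_right_le[of True "k - i" "l - j"]
      unfolding ab hex_dist_def right_vertex_def by (simp add: algebra_simps)
  next
    case 4 then show ?thesis using offset_dist_left_le[of False "k - i" "l - j"]
      unfolding ab hex_dist_def right_vertex_def by (simp add: algebra_simps)
  qed
qed

lemma hex_dist_descent:
  assumes "a \<noteq> b" shows "\<exists>w. hex_adj a w \<and> hex_dist w b + 1 = hex_dist a b"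
proof -
  obtain i j k l where ab: "a = (i, j)" "b = (k, l)" by fastforce
  define r where "r = right_vertex a"
  consider "k - i > 0" "r" | "k - i < 0" "\<not> r"
    | "\<not> (k - i > 0 \<and> r)" "\<not> (k - i < 0 \<and> \<not> r)" "l - j \<ge> 0"
    | "\<not> (k - i > 0 \<and> r)" "\<not> (k - i < 0 \<and> \<not> r)" "l - j < 0"
    by linarith
  then show ?thesis
  proof cases
    case 1
    then have "hex_adj a (i + 1, j) \<and> hex_dist (i + 1, j) b + 1 = hex_dist a b"
      using offset_dist_right_eq[of r "k - i" "l - j"]
      unfolding ab hex_adj_def hex_dist_def r_def right_vertex_def by (simp add: algebra_simps)
    then show ?thesis by blast
  next
    case 2
    then have "hex_adj a (i - 1, j) \<and> hex_dist (i - 1, j) b + 1 = hex_dist a b"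
      using offset_dist_left_eq[of r "k - i" "l - j"]
      unfolding ab hex_adj_def hex_dist_def r_def right_vertex_def
      by (simp add: algebra_simps; presburger)
    then show ?thesis by blast
  next
    case 3
    moreover have "(k - i, l - j) \<noteq> (0, 0)" using assms ab by auto
    ultimately have "hex_adj a (i, j + 1) \<and> hex_dist (i, j + 1) b + 1 = hex_dist a b"
      using offset_dist_up_eq[of "k - i" r "l - j"]
      unfolding ab hex_adj_def hex_dist_def r_def right_vertex_def
      by (simp add: algebra_simps; presburger)
    then show ?thesis by blast
  next
    case 4
    then have "hex_adj a (i, j - 1) \<and> hex_dist (i, j - 1) b + 1 = hex_dist a b"
      using offset_dist_down_eq[of "k - i" r "l - j"]
      unfolding ab hex_adj_def hex_dist_def r_def right_vertex_def
      by (simp add: algebra_simps; presburger)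
    then show ?thesis by blast
  qed
qed

lemma hex_dist_le_walk: "walk n a b \<Longrightarrow> hex_dist a b \<le> int n"
proof (induction n arbitrary: a)
  case 0 then show ?case by (simp add: hex_dist_def offset_dist_vertical)
next
  case (Suc n)
  then obtain w where "hex_adj a w" "walk n w b" by auto
  with Suc.IH[of w] hex_dist_adj_le[of a w b] show ?case by simp
qed

lemma walk_hex_dist: "hex_dist a b = int n \<Longrightarrow> walk n a b"
proof (induction n arbitrary: a)
  case 0 then show ?case by (simp add: hex_dist_def offset_dist_eq_0_iff prod_eq_iff)
next
  case (Suc n)
  then have "a \<noteq> b" by (auto simp: hex_dist_def offset_dist_vertical)
  then obtain w where "hex_adj a w" "hex_dist w b + 1 = hex_dist a b"
    using hex_dist_descent by blast
  moreover have "walk n w b" using Suc.IH[of w] Suc.prems calculation by simp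
  ultimately show ?case unfolding walk.simps by blast
qed

lemma hdist_eq_hex_dist: "int (hdist a b) = hex_dist a b"
proof -
  have "hex_dist a b \<ge> 0" by (simp add: hex_dist_def offset_dist_nonneg)
  moreover have "hdist a b = nat (hex_dist a b)" unfolding hdist_def
  proof (rule Least_equality)
    show "walk (nat (hex_dist a b)) a b" by (rule walk_hex_dist) (simp add: calculation)
    show "nat (hex_dist a b) \<le> n" if "walk n a b" for n
      using hex_dist_le_walk[OF that] by linarith
  qed
  ultimately show ?thesis by simp
qed

lemma offset_dist_side_lines:
  fixes a1 b1 a2 b2 R :: int
  assumes sphere: "offset_dist a1 b1 True = R" "offset_dist a2 b2 True = R"
  defines "h \<equiv> R div 2"
  shows "b1 = a1 - R \<Longrightarrow> b2 = a2 - R \<Longrightarrow> offset_dist (a2 - a1) (b2 - b1) r \<le> R + 1"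
    and "b1 = - a1 - R \<Longrightarrow> b2 = - a2 - R \<Longrightarrow> offset_dist (a2 - a1) (b2 - b1) r \<le> R + 1"
    and "a1 = - h \<Longrightarrow> a2 = - h \<Longrightarrow> offset_dist (a2 - a1) (b2 - b1) r \<le> R + 1"
    and "b1 = a1 + R \<Longrightarrow> b2 = a2 + R \<Longrightarrow> offset_dist (a2 - a1) (b2 - b1) r \<le> R + 1"
    and "b1 = R - a1 \<Longrightarrow> b2 = R - a2 \<Longrightarrow> offset_dist (a2 - a1) (b2 - b1) r \<le> R + 1"
    and "a1 = R - h \<Longrightarrow> a2 = R - h \<Longrightarrow> offset_dist (a2 - a1) (b2 - b1) r \<le> R + 1"
proof -
  have "R \<le> 2 * h + 1" "2 * h \<le> R" unfolding h_def by auto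
  note facts = this sphere offset_dist_bounds[of a1 b1 True] offset_dist_bounds[of a2 b2 True]
  show "b1 = a1 - R \<Longrightarrow> b2 = a2 - R \<Longrightarrow> offset_dist (a2 - a1) (b2 - b1) r \<le> R + 1"
    using facts offset_dist_diagonal(1)[of "a2 - a1" r]
    by (simp add: horizontal_cost_def of_bool_def abs_if split: if_splits; linarith?)
  show "b1 = - a1 - R \<Longrightarrow> b2 = - a2 - R \<Longrightarrow> offset_dist (a2 - a1) (b2 - b1) r \<le> R + 1"
    using facts offset_dist_diagonal(2)[of "a2 - a1" r]
    by (simp add: horizontal_cost_def of_bool_def abs_if split: if_splits; linarith?)
  show "a1 = - h \<Longrightarrow> a2 = - h \<Longrightarrow> offset_dist (a2 - a1) (b2 - b1) r \<le> R + 1"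
    using facts offset_dist_vertical[of "b2 - b1" r]
    by (simp add: horizontal_cost_def of_bool_def abs_if split: if_splits; linarith?)
  show "b1 = a1 + R \<Longrightarrow> b2 = a2 + R \<Longrightarrow> offset_dist (a2 - a1) (b2 - b1) r \<le> R + 1"
    using facts offset_dist_diagonal(1)[of "a2 - a1" r]
    by (simp add: horizontal_cost_def of_bool_def abs_if split: if_splits; linarith?)
  show "b1 = R - a1 \<Longrightarrow> b2 = R - a2 \<Longrightarrow> offset_dist (a2 - a1) (b2 - b1) r \<le> R + 1"
    using facts offset_dist_diagonal(2)[of "a2 - a1" r]
    by (simp add: horizontal_cost_def of_bool_def abs_if split: if_splits; linarith?)
  show "a1 = R - h \<Longrightarrow> a2 = R - h \<Longrightarrow> offset_dist (a2 - a1) (b2 - b1) r \<le> R + 1"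
    using facts offset_dist_vertical[of "b2 - b1" r]
    by (simp add: horizontal_cost_def of_bool_def abs_if split: if_splits; linarith?)
qed

lemma offset_dist_far_from_corners:
  fixes a b k R :: int
  assumes k: "2 \<le> k" "k < R" "odd (R - k)" and sphere: "offset_dist a b True = R"
  defines "c \<equiv> (k + 1) div 2" and "d \<equiv> k div 2" and "h \<equiv> R div 2"
  shows "R + k \<le> offset_dist a (b - k) (even k) \<Longrightarrow> b = a - R \<or> b = - a - R"
    and "R + k \<le> offset_dist (a - c) (b - d) (even k) \<Longrightarrow> b = - a - R \<or> a = - h"
    and "R + k \<le> offset_dist (a - c) (b + d) (even k) \<Longrightarrow> a = - h \<or> b = a + R"
    and "R + k \<le> offset_dist a (b + k) (even k) \<Longrightarrow> b = a + R \<or> b = R - a"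
    and "R + k \<le> offset_dist (a + d) (b + c) (even k) \<Longrightarrow> b = R - a \<or> a = R - h"
    and "R + k \<le> offset_dist (a + d) (b - c) (even k) \<Longrightarrow> a = R - h \<or> b = a - R"
proof -
  have "even k \<and> 2 * c = k \<and> 2 * d = k \<and> 2 * h + 1 = R \<or>
        odd k \<and> 2 * c = k + 1 \<and> 2 * d + 1 = k \<and> 2 * h = R \<and> 3 \<le> k"
    using k unfolding c_def d_def h_def by presburger
  note facts = this k(1,2) sphere offset_dist_bounds[of a b True]
  show "R + k \<le> offset_dist a (b - k) (even k) \<Longrightarrow> b = a - R \<or> b = - a - R"
    using facts offset_dist_bounds[of a "b - k" "even k"]
    by (cases "even k"; simp add: horizontal_cost_def of_bool_def abs_if split: if_splits; linarith?)
  show "R + k \<le> offset_dist (a - c) (b - d) (even k) \<Longrightarrow> b = - a - R \<or> a = - h"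
    using facts offset_dist_bounds[of "a - c" "b - d" "even k"]
    by (cases "even k"; simp add: horizontal_cost_def of_bool_def abs_if split: if_splits; linarith?)
  show "R + k \<le> offset_dist (a - c) (b + d) (even k) \<Longrightarrow> a = - h \<or> b = a + R"
    using facts offset_dist_bounds[of "a - c" "b + d" "even k"]
    by (cases "even k"; simp add: horizontal_cost_def of_bool_def abs_if split: if_splits; linarith?)
  show "R + k \<le> offset_dist a (b + k) (even k) \<Longrightarrow> b = a + R \<or> b = R - a"
    using facts offset_dist_bounds[of a "b + k" "even k"]
    by (cases "even k"; simp add: horizontal_cost_def of_bool_def abs_if split: if_splits; linarith?)
  show "R + k \<le> offset_dist (a + d) (b + c) (even k) \<Longrightarrow> b = R - a \<or> a = R - h"
    using facts offset_dist_bounds[of "a + d" "b + c" "even k"]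
    by (cases "even k"; simp add: horizontal_cost_def of_bool_def abs_if split: if_splits; linarith?)
  show "R + k \<le> offset_dist (a + d) (b - c) (even k) \<Longrightarrow> a = R - h \<or> b = a - R"
    using facts offset_dist_bounds[of "a + d" "b - c" "even k"]
    by (cases "even k"; simp add: horizontal_cost_def of_bool_def abs_if split: if_splits; linarith?)
qed

text \<open>The lines carrying the six sides of the hexagon \<open>sphere x R\<close> around a right vertex \<open>x\<close>, which
  reaches \<open>R div 2\<close> columns to the left of \<open>x\<close> and \<open>R - R div 2\<close> to the right. Sides \<open>m\<close> and
  \<open>m + 1 (mod 6)\<close> are the ones opposite to the \<open>m\<close>-th corner in the order of \<open>corners\<close>;
  for \<open>m \<ge> 6\<close> the set is unspecified.\<close>

definition side_line :: "vtx \<Rightarrow> nat \<Rightarrow> nat \<Rightarrow> vtx set" where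
  "side_line x R m = {u. let a = fst u - fst x; b = snd u - snd x; r = int R; h = r div 2 in
     [b = a - r, b = - a - r, a = - h, b = a + r, b = r - a, a = r - h] ! m}"

lemma side_line_diameter:
  assumes x: "right_vertex x" and "m < 6"
    and u: "u \<in> side_line x R m \<inter> sphere x R" and w: "w \<in> side_line x R m \<inter> sphere x R"
  shows "hdist u w \<le> R + 1"
proof -
  obtain i j where xij: "x = (i, j)" by fastforce
  obtain a1 b1 a2 b2 where uw: "u = (i + a1, j + b1)" "w = (i + a2, j + b2)"
    by (rule that[of "fst u - i" "snd u - j" "fst w - i" "snd w - j"]) simp_all
  have sphere: "offset_dist a1 b1 True = int R" "offset_dist a2 b2 True = int R"
    using x u w hdist_eq_hex_dist[of x u] hdist_eq_hex_dist[of x w]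
    unfolding sphere_def hex_dist_def xij uw by auto
  define r h where "r = int R" and "h = int R div 2"
  have "b1 = a1 - r \<and> b2 = a2 - r \<or> b1 = - a1 - r \<and> b2 = - a2 - r \<or> a1 = - h \<and> a2 = - h \<or>
        b1 = a1 + r \<and> b2 = a2 + r \<or> b1 = r - a1 \<and> b2 = r - a2 \<or> a1 = r - h \<and> a2 = r - h"
    using \<open>m < 6\<close> u w unfolding side_line_def xij uw r_def h_def
    by (simp add: Let_def less_Suc_eq numeral_eq_Suc; elim disjE; simp)
  then have "offset_dist (a2 - a1) (b2 - b1) (right_vertex u) \<le> int R + 1"
    using offset_dist_side_lines[OF sphere, of "right_vertex u"] unfolding r_def h_def by blast
  then show ?thesis using hdist_eq_hex_dist[of u w] unfolding hex_dist_def uw by simp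
qed

definition corner_offsets :: "nat \<Rightarrow> (int \<times> int) set" where
  "corner_offsets K = (let k = int K; c = (k + 1) div 2; d = k div 2 in
     {(0, k), (c, d), (c, - d), (0, - k), (- d, - c), (- d, c)})"

lemma corners_eq_corner_offsets: "corners x K = (\<lambda>(a, b). (fst x + a, snd x + b)) ` corner_offsets K"
  unfolding corners_def corner_offsets_def Let_def by (simp add: zdiv_int ac_simps)

lemma corners_subset_sphere:
  assumes "right_vertex x" "2 \<le> K" shows "corners x K \<subseteq> sphere x K"
proof
  fix v assume "v \<in> corners x K"
  then obtain ca cb where v: "v = (fst x + ca, snd x + cb)" and "(ca, cb) \<in> corner_offsets K"
    unfolding corners_eq_corner_offsets by auto
  then have "offset_dist ca cb True = int K"
    using assms(2) unfolding corner_offsets_def offset_dist_def horizontal_cost_def Let_def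
    by (cases "even K"; auto; presburger)
  then show "v \<in> sphere x K"
    using hdist_eq_hex_dist[of x v] assms(1) unfolding sphere_def hex_dist_def v by simp
qed

lemma far_sphere_points_on_two_side_lines:
  assumes x: "right_vertex x" and K: "2 \<le> K" "K < R" "odd (R - K)" and "v \<in> corners x K"
  shows "\<exists>m<6. \<forall>u \<in> sphere x R. R + K \<le> hdist v u \<longrightarrow>
           u \<in> side_line x R m \<union> side_line x R (Suc m mod 6)"
proof -
  obtain ca cb where v: "v = (fst x + ca, snd x + cb)" and cc: "(ca, cb) \<in> corner_offsets K"
    using assms(5) unfolding corners_eq_corner_offsets by auto
  define k c d where "k = int K" and "c = (k + 1) div 2" and "d = k div 2"
  have k: "2 \<le> k" "k < int R" "odd (int R - k)" using K unfolding k_def by presburger+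
  from cc consider "ca = 0" "cb = k" | "ca = c" "cb = d" | "ca = c" "cb = - d" | "ca = 0" "cb = - k"
    | "ca = - d" "cb = - c" | "ca = - d" "cb = c"
    unfolding corner_offsets_def Let_def k_def c_def d_def by auto
  note corner_cases = this
  have "right_vertex v \<longleftrightarrow> even k"
    using x unfolding v right_vertex_def by (cases rule: corner_cases; simp add: c_def d_def; presburger)
  then have far: "offset_dist (fst u - fst x) (snd u - snd x) True = int R \<and>
      int R + k \<le> offset_dist (fst u - fst x - ca) (snd u - snd x - cb) (even k)"
    if "u \<in> sphere x R" "R + K \<le> hdist v u" for u
    using that x hdist_eq_hex_dist[of x u] hdist_eq_hex_dist[of v u]
    unfolding sphere_def hex_dist_def v k_def by (auto simp: algebra_simps)
  from corner_cases show ?thesis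
  proof cases
    case 1 then show ?thesis using far offset_dist_far_from_corners(1)[OF k]
      by (intro exI[of _ 0]) (force simp: side_line_def c_def d_def)
  next
    case 2 then show ?thesis using far offset_dist_far_from_corners(2)[OF k]
      by (intro exI[of _ 1]) (force simp: side_line_def c_def d_def)
  next
    case 3 then show ?thesis using far offset_dist_far_from_corners(3)[OF k]
      by (intro exI[of _ 2]) (force simp: side_line_def c_def d_def)
  next
    case 4 then show ?thesis using far offset_dist_far_from_corners(4)[OF k]
      by (intro exI[of _ 3]) (force simp: side_line_def c_def d_def)
  next
    case 5 then show ?thesis using far offset_dist_far_from_corners(5)[OF k]
      by (intro exI[of _ 4]) (force simp: side_line_def c_def d_def)
  next
    case 6 then show ?thesis using far offset_dist_far_from_corners(6)[OF k]
      by (intro exI[of _ 5]) (force simp: side_line_def c_def d_def)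
  qed
qed

lemma card_le_2_if_covered_by_two_subsingletons:
  assumes "T \<subseteq> A \<union> B"
    and "\<And>u w. u \<in> T \<inter> A \<Longrightarrow> w \<in> T \<inter> A \<Longrightarrow> u = w"
    and "\<And>u w. u \<in> T \<inter> B \<Longrightarrow> w \<in> T \<inter> B \<Longrightarrow> u = w"
  shows "card T \<le> 2"
proof -
  have subsingleton_card: "card S \<le> 1" if "\<And>u w. u \<in> S \<Longrightarrow> w \<in> S \<Longrightarrow> u = w" for S :: "'a set"
  proof (cases "S = {}")
    case False
    then obtain a where "a \<in> S" by blast
    with that have "S = {a}" by blast
    then show ?thesis by simp
  qed simp
  have "T = (T \<inter> A) \<union> (T \<inter> B)" using assms(1) by blast
  then have "card T \<le> card (T \<inter> A) + card (T \<inter> B)" by (metis card_Un_le)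
  also have "\<dots> \<le> 2"
    using subsingleton_card[of "T \<inter> A", OF assms(2)] subsingleton_card[of "T \<inter> B", OF assms(3)] by simp
  finally show ?thesis .
qed

lemma dist_coloring_hdist_gt:
  assumes "dist_coloring p n f" and "u \<noteq> w" and "f u = f w"
  shows "2 * p < hdist u w"
  using assms unfolding dist_coloring_def by (meson not_le)

lemma dist_coloring_side_line_unique:
  assumes "dist_coloring p n f" and "right_vertex x" and "R + 1 \<le> 2 * p" and "l < 6"
    and "u \<in> side_line x R l \<inter> sphere x R" and "w \<in> side_line x R l \<inter> sphere x R"
    and "f u = f w"
  shows "u = w"
  using dist_coloring_hdist_gt[OF assms(1) _ assms(7)] side_line_diameter[OF assms(2,4,5,6)] assms(3)
  by fastforce

lemma dist_coloring_class_of_corner_on_two_side_lines: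
  assumes "dist_coloring p n f" and "right_vertex x" and K: "2 \<le> K" "K < R" "odd (R - K)"
    and "R + K = 2 * p + 1" and "v \<in> corners x K"
  obtains m where "m < 6"
    and "{u \<in> sphere x R. f u = f v} \<subseteq> side_line x R m \<union> side_line x R (Suc m mod 6)"
proof -
  obtain m where "m < 6" and far_on_lines: "\<forall>u \<in> sphere x R. R + K \<le> hdist v u \<longrightarrow>
      u \<in> side_line x R m \<union> side_line x R (Suc m mod 6)"
    using far_sphere_points_on_two_side_lines[OF assms(2) K assms(7)] by blast
  have "v \<notin> sphere x R"
    using corners_subset_sphere[OF assms(2) K(1)] assms(7) K(2) by (auto simp: sphere_def)
  have "u \<in> side_line x R m \<union> side_line x R (Suc m mod 6)" if u: "u \<in> sphere x R" "f u = f v" for u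
  proof -
    from u \<open>v \<notin> sphere x R\<close> have "v \<noteq> u" by blast
    with u have "R + K \<le> hdist v u"
      using dist_coloring_hdist_gt[OF assms(1), of v u] assms(6) by simp
    with u far_on_lines show ?thesis by blast
  qed
  with \<open>m < 6\<close> show thesis by (intro that) auto
qed

theorem mainTheorem6:
  fixes p q n :: nat and x v :: vtx and f :: "vtx \<Rightarrow> nat"
  assumes "p \<ge> 2" and "q \<le> p - 2"
    and "right_vertex x"
    and "dist_coloring p n f"
    and "v \<in> corners x (p - q)"
  shows "card {u \<in> sphere x (p + q + 1). f u = f v} \<le> 2"
proof -
  define K R where "K = p - q" and "R = p + q + 1"
  have K: "2 \<le> K" "K < R" "odd (R - K)" "R + K = 2 * p + 1" and "R + 1 \<le> 2 * p"
    using assms(1,2) unfolding K_def R_def by presburger+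
  let ?T = "{u \<in> sphere x R. f u = f v}"
  obtain m where "m < 6" and cover: "?T \<subseteq> side_line x R m \<union> side_line x R (Suc m mod 6)"
    using dist_coloring_class_of_corner_on_two_side_lines[OF assms(4,3) K assms(5)[folded K_def]] .
  have "card ?T \<le> 2"
  proof (rule card_le_2_if_covered_by_two_subsingletons[OF cover])
    note unique = dist_coloring_side_line_unique[OF assms(4,3) \<open>R + 1 \<le> 2 * p\<close>]
    show "u = w" if "u \<in> ?T \<inter> side_line x R m" "w \<in> ?T \<inter> side_line x R m" for u w
      using that by (intro unique[OF \<open>m < 6\<close>]) auto
    show "u = w" if "u \<in> ?T \<inter> side_line x R (Suc m mod 6)" "w \<in> ?T \<inter> side_line x R (Suc m mod 6)"
      for u w
      using that by (intro unique) auto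
  qed
  then show ?thesis unfolding R_def .
qed

end
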